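(* Let $m\ge1$ and let $p,q$ be generic. For a partition $\lambda$ with at most $m$ parts, set $$J_\lambda(u)=\frac{1}{\Delta(u)}\sum_{w\in S_m}\varepsilon(w)\,w\Big[f_{\lambda_1+m-1}(u_1)f_{\lambda_2+m-2}(u_2)\cdots f_{\lambda_m}(u_m)\Big].$$ Then $$\Big(\sum_{i=1}^mu_i\Big)J_\lambda=\sum_{i}J_{\lambda+\varepsilon_i}+\Big(\sum_{i=1}^{l(\lambda)}a(\lambda_i+m-i)+p+\frac{p(p+2q+1)}{2m-2l(\lambda)-p-2q-1}\Big)J_\lambda+\sum_{i}b(\lambda_i+m-i)\,J_{\lambda-\varepsilon_i},$$ where: - the first sum is over $i$ with $\lambda+\varepsilon_i$ a partition with at most $m$ parts; - the last sum is over $i$ with $\lambda-\varepsilon_i$ a partition; - $\lambda\pm\varepsilon_i$ means $\lambda$ with $\lambda_i$ replaced by $\lambda_i\pm1$; - $l(\lambda)$ is the number of nonzero parts of $\lambda$.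
   Context: Here $\Delta(u)=\prod_{i<j}(u_i-u_j)$ and $\varepsilon$ is the sign character of $S_m$, which permutes $u_1,\dots,u_m$. $f_l(z)=\sum_{i=0}^lC_{l,i}(z-2)^i$, where $C_{l,l}=1$ and, for $i<l$, $$C_{l,i}=4^{l-i}\frac{(i+1)\cdots l}{(l-i)!}\cdot\frac{\prod_{r=i+1}^{l}(r-p-q-\frac12)}{\prod_{r=l+i}^{2l-1}(r-p-2q)}.$$ These are monic normalized Jacobi polynomials and satisfy the three-term recurrence $zf_l=f_{l+1}+a(l)f_l+b(l)f_{l-1}$ (with $f_{-1}=0$), where $$a(x)=-\frac{2p(p+2q+1)}{(2x-p-2q-1)(2x-p-2q+1)},\qquad b(x)=\frac{2x(2x-2q-1)(2x-2p-2q-1)(2x-2p-4q-2)}{(2x-p-2q)(2x-p-2q-1)^2(2x-p-2q-2)}.$$ *)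

theory Defs
  imports Complex_Main "HOL-Combinatorics.Permutations"
begin

definition Ccoef :: "real \<Rightarrow> real \<Rightarrow> nat \<Rightarrow> nat \<Rightarrow> real" where
  "Ccoef p q l i =
     (if i = l then 1
      else 4 ^ (l - i) * (\<Prod>r\<in>{i+1..l}. real r) / fact (l - i)
           * (\<Prod>r\<in>{i+1..l}. real r - p - q - 1/2)
           / (\<Prod>r\<in>{l+i..2*l-1}. real r - p - 2*q))"

definition fJ :: "real \<Rightarrow> real \<Rightarrow> nat \<Rightarrow> real \<Rightarrow> real" where
  "fJ p q l z = (\<Sum>i=0..l. Ccoef p q l i * (z - 2) ^ i)"

definition aJ :: "real \<Rightarrow> real \<Rightarrow> real \<Rightarrow> real" where
  "aJ p q x = - (2 * p * (p + 2*q + 1)) / ((2*x - p - 2*q - 1) * (2*x - p - 2*q + 1))"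

definition bJ :: "real \<Rightarrow> real \<Rightarrow> real \<Rightarrow> real" where
  "bJ p q x = (2*x * (2*x - 2*q - 1) * (2*x - 2*p - 2*q - 1) * (2*x - 2*p - 4*q - 2))
              / ((2*x - p - 2*q) * (2*x - p - 2*q - 1)^2 * (2*x - p - 2*q - 2))"

definition Delta :: "nat \<Rightarrow> (nat \<Rightarrow> real) \<Rightarrow> real" where
  "Delta m u = (\<Prod>i\<in>{1..m}. \<Prod>j\<in>{i+1..m}. u i - u j)"

text \<open>A partition with at most m parts: lam 1 \<ge> lam 2 \<ge> ... \<ge> lam m \<ge> 0
  (only the values on {1..m} are relevant).\<close>
definition is_partition :: "nat \<Rightarrow> (nat \<Rightarrow> nat) \<Rightarrow> bool" where
  "is_partition m lam \<longleftrightarrow> (\<forall>i j. 1 \<le> i \<and> i \<le> j \<and> j \<le> m \<longrightarrow> lam j \<le> lam i)"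

definition plen :: "nat \<Rightarrow> (nat \<Rightarrow> nat) \<Rightarrow> nat" where
  "plen m lam = card {i\<in>{1..m}. lam i \<noteq> 0}"

definition Jpol :: "real \<Rightarrow> real \<Rightarrow> nat \<Rightarrow> (nat \<Rightarrow> nat) \<Rightarrow> (nat \<Rightarrow> real) \<Rightarrow> real" where
  "Jpol p q m lam u =
     (1 / Delta m u) *
     (\<Sum>w | w permutes {1..m}. of_int (sign w) * (\<Prod>i\<in>{1..m}. fJ p q (lam i + m - i) (u (w i))))"

end

theory Submission
  imports Defs
begin

text \<open>
  (1) The one-variable polynomials f_l satisfy the three-term recurrence
      z f_l = f_{l+1} + a(l) f_l + b(l) f_{l-1}.  Writing C_{l,i} via Pochhammer
      symbols, this reduces to a recurrence for the coefficients of (z-2)^i, which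
      is a rational identity in (p,q,i,l-i); genericity (p+2q not an integer)
      keeps all denominators nonzero.

  (2) For ANY family F_l satisfying a three-term recurrence, multiplying the
      alternant det(F_{k_j}(u_i)) by u_1+...+u_m shifts one column index at a
      time.  For k_j = lam_j+m-j the shifted alternants are again of partition
      type, or have two equal columns and vanish; the diagonal coefficient
      sum_j a(lam_j+m-j) splits into the nonzero parts plus a telescoping sum.

  The theorem then follows by dividing by the Vandermonde determinant.
\<close>

lemma prod_interval_pochhammer:
  "(\<Prod>r\<in>{a..<a+d}. real r + c) = pochhammer (real a + c) d"
  unfolding pochhammer_prod prod.atLeastLessThan_shift_0[of _ a]
  by (simp add: algebra_simps)

definition jcoef :: "real \<Rightarrow> real \<Rightarrow> nat \<Rightarrow> nat \<Rightarrow> real" where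
  "jcoef p q i d = 4^d * pochhammer (real i + 1) d / fact d
     * pochhammer (real i + 1 - (p+q+1/2)) d / pochhammer (2*real i + real d - (p+2*q)) d"

lemma Ccoef_eq_jcoef:
  assumes "i \<le> l"
  shows "Ccoef p q l i = jcoef p q i (l - i)"
proof (cases "i = l")
  case True
  then show ?thesis by (simp add: Ccoef_def jcoef_def)
next
  case False
  define d where "d = l - i"
  have l: "l = i + d" and "d \<ge> 1" using assms False unfolding d_def by auto
  have I1: "{i+1..l} = {i+1..<(i+1)+d}" and I2: "{l+i..2*l-1} = {2*i+d..<(2*i+d)+d}"
    using l \<open>d \<ge> 1\<close> by auto
  have "(\<Prod>r\<in>{i+1..l}. real r) = pochhammer (real i + 1) d"
    unfolding I1 using prod_interval_pochhammer[where a="i+1" and d=d and c=0]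
    by (simp only: add_0_right of_nat_add of_nat_1)
  moreover have "(\<Prod>r\<in>{i+1..l}. real r - p - q - 1/2) = pochhammer (real i + 1 - (p+q+1/2)) d"
    using prod_interval_pochhammer[where a="i+1" and d=d and c="-(p+q+1/2)"] unfolding I1
    by (simp add: algebra_simps)
  moreover have "(\<Prod>r\<in>{l+i..2*l-1}. real r - p - 2*q) = pochhammer (2*real i + real d - (p+2*q)) d"
    using prod_interval_pochhammer[where a="2*i+d" and d=d and c="-(p+2*q)"] unfolding I2
    by (simp add: algebra_simps)
  ultimately show ?thesis
    using False by (simp add: Ccoef_def jcoef_def d_def)
qed

lemma generic_nonzero:
  fixes p q c :: real
  assumes "p + 2*q \<notin> \<int>" and "c \<in> \<int>"
  shows "c - (p + 2*q) \<noteq> 0"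
  using assms by auto

lemma generic_pochhammer_nonzero:
  fixes p q c :: real
  assumes "p + 2*q \<notin> \<int>" and "c \<in> \<int>"
  shows "pochhammer (c - (p + 2*q)) d \<noteq> 0"
proof
  assume "pochhammer (c - (p + 2*q)) d = 0"
  then obtain k :: nat where "c - (p + 2*q) = - real k"
    by (auto simp: pochhammer_eq_0_iff)
  then have "p + 2*q = c + real k" by simp
  with assms show False by auto
qed

lemma jcoef_Suc:
  assumes gen: "p + 2*q \<notin> \<int>"
  shows "jcoef p q i (Suc d) = jcoef p q i d *
     (4 * (real i + 1 + real d) * (real i + 1 - (p+q+1/2) + real d) * (2*real i + real d - (p+2*q))
      / ((real d + 1) * (2*real i + 2*real d - (p+2*q)) * (2*real i + 2*real d + 1 - (p+2*q))))"
proof -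
  define a where "a = 2*real i + real d - (p+2*q)"
  have a: "a \<noteq> 0" "pochhammer a d \<noteq> 0" "a + real d \<noteq> 0" "a + real d + 1 \<noteq> 0"
    unfolding a_def using generic_nonzero[OF gen] generic_pochhammer_nonzero[OF gen]
    by (simp_all add: algebra_simps)
  have "a * pochhammer (a + 1) (Suc d) = pochhammer a (Suc (Suc d))"
    by (rule pochhammer_rec[symmetric])
  also have "\<dots> = pochhammer a d * (a + real d) * (a + real d + 1)"
    by (simp add: pochhammer_Suc)
  finally have den: "pochhammer (2*real i + real (Suc d) - (p+2*q)) (Suc d)
      = pochhammer a d * (a + real d) * (a + real d + 1) / a"
    using a by (simp add: a_def field_simps)
  show ?thesis
    unfolding jcoef_def den using a
    by (simp add: pochhammer_Suc a_def field_simps)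
qed

lemma jcoef_pred_index:
  assumes gen: "p + 2*q \<notin> \<int>" and i: "i \<ge> 1"
  shows "jcoef p q (i - 1) (Suc (Suc e)) = jcoef p q i e *
     (16 * real i * (real i + 1 + real e) * (real i - (p+q+1/2)) * (real i + 1 - (p+q+1/2) + real e)
      / ((real e + 1) * (real e + 2) * (2*real i + 2*real e - (p+2*q)) * (2*real i + 2*real e + 1 - (p+2*q))))"
proof -
  define a where "a = 2*real i + real e - (p+2*q)"
  have a: "pochhammer a e \<noteq> 0" "a + real e \<noteq> 0" "a + real e + 1 \<noteq> 0"
    unfolding a_def using generic_nonzero[OF gen] generic_pochhammer_nonzero[OF gen]
    by (simp_all add: algebra_simps)
  have ri: "real (i - 1) = real i - 1" using i by simp
  have poch2: "pochhammer x (Suc (Suc e)) = x * pochhammer (x + 1) e * (x + 1 + real e)"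
    for x :: real
    unfolding pochhammer_rec[of x "Suc e"] pochhammer_Suc[of "x + 1" e] by simp
  have P1: "pochhammer (2 * real (i-1) + real (Suc (Suc e)) - (p+2*q)) (Suc (Suc e))
      = pochhammer a e * (a + real e) * (a + real e + 1)"
    unfolding ri a_def by (simp add: pochhammer_Suc algebra_simps)
  have P2: "pochhammer (real (i-1) + 1 - (p+q+1/2)) (Suc (Suc e))
      = (real i - (p+q+1/2)) * pochhammer (real i + 1 - (p+q+1/2)) e * (real i + 1 - (p+q+1/2) + real e)"
    unfolding ri using poch2[of "real i - (p+q+1/2)"] by (simp add: algebra_simps)
  have P3: "pochhammer (real (i-1) + 1) (Suc (Suc e))
      = real i * pochhammer (real i + 1) e * (real i + 1 + real e)"
    unfolding ri using poch2[of "real i"] by simp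
  show ?thesis
    unfolding jcoef_def P1 P2 P3 using a by (simp add: a_def field_simps)
qed

text \<open>The polynomial identity behind the coefficient recurrence, with x = i and
  y = l-1-i; s and nu are the shifts p+q+1/2 and p+2q.\<close>

lemma jacobi_polynomial_identity:
  fixes p q x y :: real
  defines "s \<equiv> p + q + 1/2" and "\<nu> \<equiv> p + 2*q"
  defines "d1 \<equiv> 2*x + 2*y + 1 - \<nu>" and "d2 \<equiv> 2*x + 2*y + 2 - \<nu>" and "d3 \<equiv> 2*x + 2*y + 3 - \<nu>"
  defines "Ns \<equiv> 16 * x * (x + 1 + y) * (x - s) * (x + 1 - s + y)"
    and "N0 \<equiv> 4 * (x + 1 + y) * (x + 1 - s + y) * (2*x + y - \<nu>)"
    and "N1 \<equiv> 4 * (x + 2 + y) * (x + 2 - s + y) * (2*x + y + 1 - \<nu>)"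
    and "Nb \<equiv> 2*(x+y+1) * (2*(x+y+1) - 2*q - 1) * (2*(x+y+1) - 2*p - 2*q - 1) * (2*(x+y+1) - 2*p - 4*q - 2)"
  shows "Ns*d1*d2*d3 + 2*N0*(y+2)*d1*d2*d3
       = N0*N1*d1 + (- 2 * p * (p + 2*q + 1))*N0*(y+2)*d2 + Nb*(y+1)*(y+2)*d3"
  unfolding assms by algebra

text \<open>The same identity after dividing by the common denominator; stated for
  abstract quantities so that the field arithmetic stays small.\<close>

lemma cleared_denominators:
  fixes Ns N0 N1 A Nb Y1 Y2 d0 d1 d2 d3 :: real
  assumes nz: "Y1 \<noteq> 0" "Y2 \<noteq> 0" "d0 \<noteq> 0" "d1 \<noteq> 0" "d2 \<noteq> 0" "d3 \<noteq> 0"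
    and poly: "Ns*d1*d2*d3 + 2*N0*Y2*d1*d2*d3 = N0*N1*d1 + A*N0*Y2*d2 + Nb*Y1*Y2*d3"
  shows "Ns/(Y1*Y2*d0*d1) + 2*(N0/(Y1*d0*d1))
       = N0/(Y1*d0*d1) * (N1/(Y2*d2*d3)) + A/(d1*d3) * (N0/(Y1*d0*d1)) + Nb/(d2*d1^2*d0)"
proof -
  have "Ns/(Y1*Y2*d0*d1) + 2*(N0/(Y1*d0*d1))
      = (Ns*d1*d2*d3 + 2*N0*Y2*d1*d2*d3) / (Y1*Y2*d0*d1^2*d2*d3)"
    using nz by (simp add: field_simps power2_eq_square)
  also have "\<dots> = (N0*N1*d1 + A*N0*Y2*d2 + Nb*Y1*Y2*d3) / (Y1*Y2*d0*d1^2*d2*d3)"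
    by (simp only: poly)
  also have "\<dots> = N0/(Y1*d0*d1) * (N1/(Y2*d2*d3)) + A/(d1*d3) * (N0/(Y1*d0*d1)) + Nb/(d2*d1^2*d0)"
    using nz by (simp add: field_simps power2_eq_square)
  finally show ?thesis .
qed

text \<open>Coefficient recurrence for index i < l: comparing coefficients of (z-2)^i in
  (z-2) f_l + 2 f_l = f_{l+1} + a(l) f_l + b(l) f_{l-1}.  All four coefficients
  are multiples of K = C_{l-1,i}, and the multipliers satisfy the rational identity above.\<close>

lemma coef_rec_interior:
  assumes gen: "p + 2*q \<notin> \<int>" and l: "l = i + e + 1"
  shows "(if i = 0 then 0 else Ccoef p q l (i-1)) + 2 * Ccoef p q l i
     = Ccoef p q (l+1) i + aJ p q (real l) * Ccoef p q l i + bJ p q (real l) * Ccoef p q (l-1) i"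
proof -
  define x y s \<nu> where "x = real i" and "y = real e" and "s = p + q + 1/2" and "\<nu> = p + 2*q"
  define d0 d1 d2 d3 where "d0 = 2*x + 2*y - \<nu>" and "d1 = 2*x + 2*y + 1 - \<nu>"
    and "d2 = 2*x + 2*y + 2 - \<nu>" and "d3 = 2*x + 2*y + 3 - \<nu>"
  define Ns N0 N1 Nb where "Ns = 16 * x * (x + 1 + y) * (x - s) * (x + 1 - s + y)"
    and "N0 = 4 * (x + 1 + y) * (x + 1 - s + y) * (2*x + y - \<nu>)"
    and "N1 = 4 * (x + 2 + y) * (x + 2 - s + y) * (2*x + y + 1 - \<nu>)"
    and "Nb = 2*(x+y+1) * (2*(x+y+1) - 2*q - 1) * (2*(x+y+1) - 2*p - 2*q - 1) * (2*(x+y+1) - 2*p - 4*q - 2)"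
  define K where "K = jcoef p q i e"
  have nz: "y + 1 \<noteq> 0" "y + 2 \<noteq> 0" "d0 \<noteq> 0" "d1 \<noteq> 0" "d2 \<noteq> 0" "d3 \<noteq> 0"
    unfolding y_def d0_def d1_def d2_def d3_def x_def \<nu>_def
    using generic_nonzero[OF gen] by (simp_all add: add.assoc)
  have step0: "jcoef p q i (Suc e) = K * (N0/((y+1)*d0*d1))"
    unfolding jcoef_Suc[OF gen] K_def N0_def d0_def d1_def x_def y_def s_def \<nu>_def by simp
  have step1: "jcoef p q i (Suc (Suc e)) = K * (N0/((y+1)*d0*d1)) * (N1/((y+2)*d2*d3))"
    unfolding jcoef_Suc[OF gen, of i "Suc e"] step0
    unfolding N1_def d2_def d3_def x_def y_def s_def \<nu>_def by (simp add: algebra_simps)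
  have left: "(if i = 0 then 0 else Ccoef p q l (i-1)) = K * (Ns/((y+1)*(y+2)*d0*d1))"
  proof (cases "i = 0")
    case True
    then show ?thesis by (simp add: Ns_def x_def)
  next
    case False
    then have "Ccoef p q l (i-1) = jcoef p q (i-1) (Suc (Suc e))"
      using Ccoef_eq_jcoef[of "i-1" l] l by (simp add: Suc_diff_le)
    then show ?thesis
      using False jcoef_pred_index[OF gen, of i]
      unfolding K_def Ns_def d0_def d1_def x_def y_def s_def \<nu>_def by simp
  qed
  have coefs: "Ccoef p q (l-1) i = K" "Ccoef p q l i = jcoef p q i (Suc e)"
    "Ccoef p q (l+1) i = jcoef p q i (Suc (Suc e))"
    using Ccoef_eq_jcoef[of i] l unfolding K_def by simp_all
  have a: "aJ p q (real l) = (- 2 * p * (p + 2*q + 1)) / (d1*d3)"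
    unfolding aJ_def l d1_def d3_def x_def y_def \<nu>_def by (simp add: algebra_simps)
  have b: "bJ p q (real l) = Nb / (d2*d1^2*d0)"
    unfolding bJ_def l Nb_def d0_def d1_def d2_def x_def y_def \<nu>_def by (simp add: algebra_simps)
  have ratios: "Ns/((y+1)*(y+2)*d0*d1) + 2*(N0/((y+1)*d0*d1))
       = N0/((y+1)*d0*d1) * (N1/((y+2)*d2*d3)) + (- 2 * p * (p + 2*q + 1))/(d1*d3) * (N0/((y+1)*d0*d1))
         + Nb/(d2*d1^2*d0)"
  proof (rule cleared_denominators[OF nz])
    show "Ns*d1*d2*d3 + 2*N0*(y+2)*d1*d2*d3
       = N0*N1*d1 + (- 2 * p * (p + 2*q + 1))*N0*(y+2)*d2 + Nb*(y+1)*(y+2)*d3"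
      using jacobi_polynomial_identity[where p=p and q=q and x=x and y=y]
      unfolding Ns_def N0_def N1_def Nb_def d1_def d2_def d3_def s_def \<nu>_def .
  qed
  have scale: "K*\<sigma> + 2*(K*\<rho>) = K*\<rho>*\<rho>' + \<alpha>*(K*\<rho>) + \<beta>*K"
    if "\<sigma> + 2*\<rho> = \<rho>*\<rho>' + \<alpha>*\<rho> + \<beta>" for \<sigma> \<rho> \<rho>' \<alpha> \<beta> :: real
    using arg_cong[OF that, of "\<lambda>t. K*t"] by (simp add: algebra_simps)
  show ?thesis
    unfolding left coefs step0 step1 a b by (rule scale[OF ratios])
qed

lemma jcoef_one: "jcoef p q i 1 = 4 * (real i + 1) * (real i + 1 - (p+q+1/2)) / (2*real i + 1 - (p+2*q))"
  by (simp add: jcoef_def)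

text \<open>Coefficient recurrence at the top index i = l (where C_{l-1,l} does not exist).\<close>

lemma coef_rec_top:
  assumes gen: "p + 2*q \<notin> \<int>"
  shows "(if l = 0 then 0 else Ccoef p q l (l-1)) + 2 = Ccoef p q (l+1) l + aJ p q (real l)"
proof -
  have upper: "Ccoef p q (l+1) l = 4 * (real l + 1) * (real l + 1 - (p+q+1/2)) / (2*real l + 1 - (p+2*q))"
    using Ccoef_eq_jcoef[of l "l+1"] jcoef_one by simp
  have lower: "(if l = 0 then 0 else Ccoef p q l (l-1)) = 4 * real l * (real l - (p+q+1/2)) / (2*real l - 1 - (p+2*q))"
    using Ccoef_eq_jcoef[of "l-1" l] jcoef_one[of p q "l-1"] by (cases l) (simp_all add: algebra_simps)
  define dm dp where "dm = 2*real l - 1 - (p+2*q)" and "dp = 2*real l + 1 - (p+2*q)"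
  have nz: "dm \<noteq> 0" "dp \<noteq> 0" unfolding dm_def dp_def
    using generic_nonzero[OF gen, of "2*real l - 1"] generic_nonzero[OF gen, of "2*real l + 1"] by simp_all
  have "4 * real l * (real l - (p+q+1/2)) / dm + 2
      = (4 * real l * (real l - (p+q+1/2)) * dp + 2 * (dm * dp)) / (dm * dp)"
    using nz by (simp add: field_simps)
  also have "4 * real l * (real l - (p+q+1/2)) * dp + 2 * (dm * dp)
      = 4 * (real l + 1) * (real l + 1 - (p+q+1/2)) * dm - 2 * p * (p + 2*q + 1)"
    unfolding dm_def dp_def by algebra
  also have "\<dots> / (dm * dp)
      = 4 * (real l + 1) * (real l + 1 - (p+q+1/2)) / dp - (2 * p * (p + 2*q + 1)) / (dm * dp)"
    using nz by (simp add: field_simps)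
  finally have "4 * real l * (real l - (p+q+1/2)) / dm + 2
      = 4 * (real l + 1) * (real l + 1 - (p+q+1/2)) / dp - (2 * p * (p + 2*q + 1)) / (dm * dp)" .
  moreover have "aJ p q (real l) = - (2 * p * (p + 2*q + 1)) / (dm * dp)"
    unfolding aJ_def dm_def dp_def by (simp add: algebra_simps)
  ultimately show ?thesis
    unfolding upper lower dm_def dp_def by simp
qed

definition coef :: "real \<Rightarrow> real \<Rightarrow> nat \<Rightarrow> nat \<Rightarrow> real" where
  "coef p q l i = (if i \<le> l then Ccoef p q l i else 0)"

text \<open>b(0) = 0, so the recurrence never reaches f_{-1}.\<close>

lemma bJ_zero: "bJ p q 0 = 0"
  by (simp add: bJ_def)

lemma coef_rec:
  assumes gen: "p + 2*q \<notin> \<int>" and i: "i \<le> l + 1"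
  shows "(if i = 0 then 0 else Ccoef p q l (i-1)) + 2 * coef p q l i
     = coef p q (l+1) i + aJ p q (real l) * coef p q l i + bJ p q (real l) * coef p q (l-1) i"
proof -
  consider "i = l + 1" | "i = l" | "i < l"
    using i by linarith
  then show ?thesis
  proof cases
    case 1
    then have "\<not> i \<le> l" "\<not> i \<le> l - 1" by simp_all
    with 1 show ?thesis by (simp add: coef_def Ccoef_def)
  next
    case 2
    have "bJ p q (real l) * coef p q (l-1) l = 0"
      by (cases l) (simp_all add: coef_def bJ_zero)
    moreover have "coef p q l l = 1" "coef p q (l+1) l = Ccoef p q (l+1) l"
      by (simp_all add: coef_def Ccoef_def)
    ultimately show ?thesis
      unfolding 2 using coef_rec_top[OF gen, of l] by (simp only: mult_1_right add_0_right)
  next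
    case 3
    then obtain e where l: "l = i + e + 1"
      using less_imp_Suc_add by fastforce
    then show ?thesis
      using coef_rec_interior[OF gen l] by (simp add: coef_def)
  qed
qed

lemma fJ_as_coef_sum:
  assumes "l \<le> n"
  shows "fJ p q l z = (\<Sum>i=0..n. coef p q l i * (z - 2)^i)"
proof -
  have "(\<Sum>i=0..n. coef p q l i * (z - 2)^i) = (\<Sum>i=0..l. coef p q l i * (z - 2)^i)"
    by (rule sum.mono_neutral_right) (use assms in \<open>auto simp: coef_def\<close>)
  also have "\<dots> = fJ p q l z"
    unfolding fJ_def by (rule sum.cong) (auto simp: coef_def)
  finally show ?thesis by simp
qed

theorem fJ_three_term:
  assumes gen: "p + 2*q \<notin> \<int>"
  shows "z * fJ p q l z = fJ p q (l+1) z + aJ p q (real l) * fJ p q l z + bJ p q (real l) * fJ p q (l-1) z"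
proof -
  define y where "y = z - 2"
  have expand: "fJ p q k z = (\<Sum>i=0..l+1. coef p q k i * y^i)" if "k \<le> l + 1" for k
    unfolding y_def using that by (rule fJ_as_coef_sum)
  have "z * fJ p q l z = (\<Sum>i=0..l. Ccoef p q l i * y^(Suc i)) + 2 * fJ p q l z"
    unfolding fJ_def y_def sum_distrib_left sum.distrib[symmetric]
    by (rule sum.cong) (simp_all add: algebra_simps)
  also have "(\<Sum>i=0..l. Ccoef p q l i * y^(Suc i))
      = (\<Sum>i=0..l+1. (if i = 0 then 0 else Ccoef p q l (i-1)) * y^i)"
    by (simp only: Suc_eq_plus1[symmetric] sum.atLeast0_atMost_Suc_shift) simp
  also have "\<dots> + 2 * fJ p q l z
      = (\<Sum>i=0..l+1. ((if i = 0 then 0 else Ccoef p q l (i-1)) + 2 * coef p q l i) * y^i)"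
    unfolding expand[of l, OF le_add1] sum_distrib_left sum.distrib[symmetric]
    by (rule sum.cong) (simp_all add: algebra_simps)
  also have "\<dots> = (\<Sum>i=0..l+1. (coef p q (l+1) i + aJ p q (real l) * coef p q l i
                                  + bJ p q (real l) * coef p q (l-1) i) * y^i)"
    by (rule sum.cong) (simp_all add: coef_rec[OF gen])
  also have "\<dots> = fJ p q (l+1) z + aJ p q (real l) * fJ p q l z + bJ p q (real l) * fJ p q (l-1) z"
  proof -
    have "fJ p q (l+1) z = (\<Sum>i=0..l+1. coef p q (l+1) i * y^i)"
      "fJ p q (l-1) z = (\<Sum>i=0..l+1. coef p q (l-1) i * y^i)"
      by (intro expand; simp)+
    then show ?thesis
      unfolding expand[of l, OF le_add1] sum_distrib_left sum.distrib[symmetric]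
      by (simp add: sum.distrib[symmetric] sum_distrib_left algebra_simps)
  qed
  finally show ?thesis .
qed

text \<open>a(k) = g(k+1) - g(k) with g(k) = p(p+2q+1)/(2k-p-2q-1), so its partial sums
  telescope; g(0) = -p.\<close>

lemma aJ_telescope:
  assumes gen: "p + 2*q \<notin> \<int>"
  shows "(\<Sum>k<n. aJ p q (real k)) = p + p * (p + 2*q + 1) / (2 * real n - p - 2*q - 1)"
proof -
  define g where "g k = p * (p + 2*q + 1) / (2 * real k - p - 2*q - 1)" for k
  have nz: "2 * real k - 1 - (p + 2*q) \<noteq> 0" "2 * real k + 1 - (p + 2*q) \<noteq> 0" for k
    using generic_nonzero[OF gen, of "2 * real k - 1"] generic_nonzero[OF gen, of "2 * real k + 1"]
    by simp_all
  have "aJ p q (real k) = g (Suc k) - g k" for k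
    using nz[of k] unfolding aJ_def g_def by (simp add: field_simps)
  then have "(\<Sum>k<n. aJ p q (real k)) = g n - g 0"
    by (simp add: sum_lessThan_telescope)
  also have "g 0 = - p"
    using nz[of 0] unfolding g_def by (simp add: field_simps)
  finally show ?thesis unfolding g_def by simp
qed

definition alternant :: "nat \<Rightarrow> (nat \<Rightarrow> real \<Rightarrow> real) \<Rightarrow> (nat \<Rightarrow> real) \<Rightarrow> real" where
  "alternant m g u = (\<Sum>w | w permutes {1..m}. of_int (sign w) * (\<Prod>i\<in>{1..m}. g i (u (w i))))"

lemma alternant_column:
  assumes j: "j \<in> {1..m}"
  shows "alternant m (g(j := h)) u =
    (\<Sum>w | w permutes {1..m}. of_int (sign w) * h (u (w j)) * (\<Prod>i\<in>{1..m}-{j}. g i (u (w i))))"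
  unfolding alternant_def
proof (rule sum.cong[OF refl])
  fix w
  have "(\<Prod>i\<in>{1..m}. (g(j := h)) i (u (w i)))
      = h (u (w j)) * (\<Prod>i\<in>{1..m}-{j}. (g(j := h)) i (u (w i)))"
    using j by (simp add: prod.remove)
  also have "(\<Prod>i\<in>{1..m}-{j}. (g(j := h)) i (u (w i))) = (\<Prod>i\<in>{1..m}-{j}. g i (u (w i)))"
    by (rule prod.cong) auto
  finally show "of_int (sign w) * (\<Prod>i\<in>{1..m}. (g(j := h)) i (u (w i))) =
      of_int (sign w) * h (u (w j)) * (\<Prod>i\<in>{1..m}-{j}. g i (u (w i)))"
    by simp
qed

lemma alternant_column_linear:
  assumes j: "j \<in> {1..m}"
  shows "alternant m (g(j := (\<lambda>z. a * h1 z + b * h2 z + c * h3 z))) u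
       = a * alternant m (g(j := h1)) u + b * alternant m (g(j := h2)) u + c * alternant m (g(j := h3)) u"
  unfolding alternant_column[OF j] sum_distrib_left sum.distrib[symmetric]
  by (rule sum.cong) (simp_all add: algebra_simps)

lemma alternant_equal_columns:
  assumes i: "i \<in> {1..m}" and j: "j \<in> {1..m}" and "i \<noteq> j" and eq: "g i = g j"
  shows "alternant m g u = 0"
proof -
  let ?t = "transpose i j"
  have t: "?t permutes {1..m}" using i j by (rule permutes_swap_id)
  have swap: "of_int (sign (w \<circ> ?t)) * (\<Prod>k\<in>{1..m}. g k (u ((w \<circ> ?t) k)))
      = - (of_int (sign w) * (\<Prod>k\<in>{1..m}. g k (u (w k))))" if w: "w permutes {1..m}" for w
  proof -
    have "permutation w" "permutation ?t"
      using w t permutation_permutes by blast+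
    then have "sign (w \<circ> ?t) = - sign w"
      using \<open>i \<noteq> j\<close> by (simp add: sign_compose sign_swap_id)
    moreover have "(\<Prod>k\<in>{1..m}. g k (u ((w \<circ> ?t) k))) = (\<Prod>k\<in>{1..m}. g (?t k) (u (w k)))"
      using prod.permute[OF t, of "\<lambda>k. g (?t k) (u (w k))"] by (simp add: o_def)
    moreover have "g (?t k) = g k" for k
      using eq by (auto simp: transpose_def)
    ultimately show ?thesis by simp
  qed
  have "alternant m g u
      = (\<Sum>w | w permutes {1..m}. of_int (sign (w \<circ> ?t)) * (\<Prod>k\<in>{1..m}. g k (u ((w \<circ> ?t) k))))"
    unfolding alternant_def by (rule sum_permutations_compose_right[OF t])
  also have "\<dots> = - alternant m g u"
    unfolding alternant_def sum_negf[symmetric] by (rule sum.cong[OF refl]) (rule swap, simp)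
  finally show ?thesis by simp
qed

lemma alternant_times_power_sum:
  "(\<Sum>i=1..m. u i) * alternant m g u = (\<Sum>j=1..m. alternant m (g(j := (\<lambda>z. z * g j z))) u)"
proof -
  let ?P = "\<lambda>w. \<Prod>i\<in>{1..m}. g i (u (w i))"
  have column: "alternant m (g(j := (\<lambda>z. z * g j z))) u
      = (\<Sum>w | w permutes {1..m}. of_int (sign w) * u (w j) * ?P w)" if j: "j \<in> {1..m}" for j
    unfolding alternant_column[OF j] using j by (intro sum.cong) (simp_all add: prod.remove)
  have permuted_sum: "(\<Sum>j=1..m. u (w j)) = (\<Sum>j=1..m. u j)" if "w permutes {1..m}" for w
    using sum.permute[OF that, of u] by (simp add: o_def)
  have "(\<Sum>j=1..m. alternant m (g(j := (\<lambda>z. z * g j z))) u)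
      = (\<Sum>j=1..m. \<Sum>w | w permutes {1..m}. of_int (sign w) * u (w j) * ?P w)"
    using column by simp
  also have "\<dots> = (\<Sum>w | w permutes {1..m}. of_int (sign w) * (\<Sum>j=1..m. u (w j)) * ?P w)"
    by (subst sum.swap) (simp add: sum_distrib_left sum_distrib_right)
  also have "\<dots> = (\<Sum>w | w permutes {1..m}. (\<Sum>j=1..m. u j) * (of_int (sign w) * ?P w))"
    using permuted_sum by (intro sum.cong) simp_all
  also have "\<dots> = (\<Sum>i=1..m. u i) * alternant m g u"
    unfolding alternant_def by (simp add: sum_distrib_left)
  finally show ?thesis by simp
qed

theorem alternant_three_term:
  fixes F :: "nat \<Rightarrow> real \<Rightarrow> real" and A B :: "nat \<Rightarrow> real" and k :: "nat \<Rightarrow> nat"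
  assumes rec: "\<And>l z. z * F l z = F (l+1) z + A l * F l z + B l * F (l-1) z"
  defines "g \<equiv> \<lambda>i. F (k i)"
  shows "(\<Sum>i=1..m. u i) * alternant m g u
       = (\<Sum>j=1..m. alternant m (g(j := F (k j + 1))) u)
         + (\<Sum>j=1..m. A (k j)) * alternant m g u
         + (\<Sum>j=1..m. B (k j) * alternant m (g(j := F (k j - 1))) u)"
proof -
  have "alternant m (g(j := (\<lambda>z. z * g j z))) u
      = alternant m (g(j := F (k j + 1))) u + A (k j) * alternant m g u
        + B (k j) * alternant m (g(j := F (k j - 1))) u" if j: "j \<in> {1..m}" for j
  proof -
    have col: "(\<lambda>z. z * g j z)
        = (\<lambda>z. 1 * F (k j + 1) z + A (k j) * F (k j) z + B (k j) * F (k j - 1) z)"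
      unfolding g_def using rec by simp
    have unchanged: "g(j := F (k j)) = g"
      unfolding g_def by auto
    show ?thesis
      unfolding col alternant_column_linear[OF j] unchanged by simp
  qed
  then show ?thesis
    unfolding alternant_times_power_sum by (simp add: sum.distrib sum_distrib_right)
qed

lemma partition_antimono:
  assumes "is_partition m lam" and "1 \<le> i" "i \<le> j" "j \<le> m"
  shows "lam j \<le> lam i"
  using assms unfolding is_partition_def by blast

text \<open>Raising part j fails to give a partition only when part j-1 equals part j;
  then the raised column coincides with column j-1.\<close>

lemma raise_fails:
  assumes P: "is_partition m lam" and j: "j \<in> {1..m}"
    and fail: "\<not> is_partition m (lam(j := lam j + 1))"
  shows "2 \<le> j \<and> lam (j-1) = lam j"
proof (rule ccontr)
  assume "\<not> (2 \<le> j \<and> lam (j-1) = lam j)"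
  then have room: "j = 1 \<or> lam j < lam (j-1)"
    using j partition_antimono[OF P, of "j-1" j] by fastforce
  have "is_partition m (lam(j := lam j + 1))"
    unfolding is_partition_def
  proof (intro allI impI)
    fix a b assume ab: "1 \<le> a \<and> a \<le> b \<and> b \<le> m"
    then have "lam b \<le> lam a" using partition_antimono[OF P] by blast
    moreover have "lam (j-1) \<le> lam a" if "a < j"
      using partition_antimono[OF P, of a "j-1"] ab j that by simp
    ultimately show "(lam(j := lam j + 1)) b \<le> (lam(j := lam j + 1)) a"
      using room ab by auto
  qed
  with fail show False ..
qed

text \<open>Lowering part j fails only when it is the last part and is zero, or when
  part j+1 equals part j; then the lowered column coincides with column j+1.\<close>

lemma lower_fails:
  assumes P: "is_partition m lam" and j: "j \<in> {1..m}"
    and fail: "\<not> (1 \<le> lam j \<and> is_partition m (lam(j := lam j - 1)))"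
  shows "(j = m \<and> lam j = 0) \<or> (j < m \<and> lam (j+1) = lam j)"
proof (rule ccontr)
  assume "\<not> ?thesis"
  then have pos: "1 \<le> lam j" and room: "j = m \<or> lam (j+1) < lam j"
    using j partition_antimono[OF P, of j "j+1"] by fastforce+
  have "is_partition m (lam(j := lam j - 1))"
    unfolding is_partition_def
  proof (intro allI impI)
    fix a b assume ab: "1 \<le> a \<and> a \<le> b \<and> b \<le> m"
    then have "lam b \<le> lam a" using partition_antimono[OF P] by blast
    moreover have "lam b \<le> lam (j+1)" if "j < b"
      using partition_antimono[OF P, of "j+1" b] ab j that by simp
    ultimately show "(lam(j := lam j - 1)) b \<le> (lam(j := lam j - 1)) a"
      using room ab by auto
  qed
  with fail pos show False by blast
qed

lemma downclosed_interval:
  fixes A :: "nat set"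
  assumes sub: "A \<subseteq> {1..m}" and down: "\<And>i j. j \<in> A \<Longrightarrow> 1 \<le> i \<Longrightarrow> i \<le> j \<Longrightarrow> i \<in> A"
  shows "A = {1..card A}"
proof -
  obtain n where "A = {1..n}"
  proof (cases "A = {}")
    case True
    then show ?thesis using that[of 0] by simp
  next
    case False
    have fin: "finite A" using sub finite_subset by blast
    have "A = {1..Max A}"
      using Max_ge[OF fin] Max_in[OF fin False] sub down by fastforce
    then show ?thesis by (rule that)
  qed
  then show ?thesis by simp
qed

lemma nonzero_parts:
  assumes P: "is_partition m lam"
  shows "{i\<in>{1..m}. lam i \<noteq> 0} = {1..plen m lam}"
  unfolding plen_def
proof (rule downclosed_interval)
  fix i j assume "j \<in> {i\<in>{1..m}. lam i \<noteq> 0}" "1 \<le> i" "i \<le> j"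
  then show "i \<in> {i\<in>{1..m}. lam i \<noteq> 0}"
    using partition_antimono[OF P, of i j] by auto
qed auto

lemma plen_le: "plen m lam \<le> m"
proof -
  have "plen m lam \<le> card {1..m}"
    unfolding plen_def by (rule card_mono) auto
  then show ?thesis by simp
qed

lemma diagonal_sum:
  fixes A :: "nat \<Rightarrow> real"
  assumes P: "is_partition m lam"
  shows "(\<Sum>j=1..m. A (lam j + m - j))
       = (\<Sum>i=1..plen m lam. A (lam i + m - i)) + (\<Sum>k<m - plen m lam. A k)"
proof -
  define L where "L = plen m lam"
  have parts: "{i\<in>{1..m}. lam i \<noteq> 0} = {1..L}"
    unfolding L_def by (rule nonzero_parts[OF P])
  have "L \<le> m" unfolding L_def by (rule plen_le)
  have zero: "lam j = 0" if "L < j" "j \<le> m" for j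
  proof -
    have "j \<notin> {i\<in>{1..m}. lam i \<noteq> 0}" unfolding parts using that by simp
    with that show ?thesis by simp
  qed
  have "{1..m} = {1..L} \<union> {L+1..m}"
    using \<open>L \<le> m\<close> by auto
  then have "(\<Sum>j=1..m. A (lam j + m - j))
      = (\<Sum>j=1..L. A (lam j + m - j)) + (\<Sum>j=L+1..m. A (lam j + m - j))"
    by (simp add: sum.union_disjoint)
  also have "(\<Sum>j=L+1..m. A (lam j + m - j)) = (\<Sum>j=L+1..m. A (m - j))"
    using zero by (intro sum.cong) auto
  also have "\<dots> = (\<Sum>k<m-L. A k)"
    by (rule sum.reindex_bij_witness[where i="\<lambda>k. m - k" and j="\<lambda>j. m - j"]) (use \<open>L \<le> m\<close> in auto)
  finally show ?thesis unfolding L_def .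
qed

text \<open>The up-shifted alternants for k_i = lam_i+m-i: those that are not partition
  alternants vanish.\<close>

lemma raising_terms:
  fixes F :: "nat \<Rightarrow> real \<Rightarrow> real"
  assumes P: "is_partition m lam"
  defines "g \<equiv> \<lambda>i. F (lam i + m - i)"
  shows "(\<Sum>j=1..m. alternant m (g(j := F (lam j + m - j + 1))) u)
       = (\<Sum>j\<in>{j\<in>{1..m}. is_partition m (lam(j := lam j + 1))}.
            alternant m (\<lambda>i. F ((lam(j := lam j + 1)) i + m - i)) u)"
proof (intro sum.mono_neutral_cong_right ballI)
  show "alternant m (g(j := F (lam j + m - j + 1))) u = 0"
    if "j \<in> {1..m} - {j\<in>{1..m}. is_partition m (lam(j := lam j + 1))}" for j
  proof -
    from that have j: "j \<in> {1..m}" by simp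
    with that raise_fails[OF P j] have "2 \<le> j" "lam (j-1) = lam j" by auto
    then show ?thesis
      using j by (intro alternant_equal_columns[of "j-1" m j]) (auto simp: g_def Suc_diff_le)
  qed
  show "alternant m (g(j := F (lam j + m - j + 1))) u
      = alternant m (\<lambda>i. F ((lam(j := lam j + 1)) i + m - i)) u"
    if "j \<in> {j\<in>{1..m}. is_partition m (lam(j := lam j + 1))}" for j
  proof -
    from that have "j \<le> m" by simp
    then have "g(j := F (lam j + m - j + 1)) = (\<lambda>i. F ((lam(j := lam j + 1)) i + m - i))"
      unfolding g_def by (auto simp: fun_eq_iff Suc_diff_le)
    then show ?thesis by simp
  qed
qed auto

text \<open>The down-shifted alternants for k_i = lam_i+m-i: those that are not partition
  alternants vanish or carry the factor B(0) = 0.\<close>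

lemma lowering_terms:
  fixes F :: "nat \<Rightarrow> real \<Rightarrow> real" and B :: "nat \<Rightarrow> real"
  assumes P: "is_partition m lam" and B0: "B 0 = 0"
  defines "g \<equiv> \<lambda>i. F (lam i + m - i)"
  shows "(\<Sum>j=1..m. B (lam j + m - j) * alternant m (g(j := F (lam j + m - j - 1))) u)
       = (\<Sum>j\<in>{j\<in>{1..m}. 1 \<le> lam j \<and> is_partition m (lam(j := lam j - 1))}.
            B (lam j + m - j) * alternant m (\<lambda>i. F ((lam(j := lam j - 1)) i + m - i)) u)"
proof (intro sum.mono_neutral_cong_right ballI)
  show "B (lam j + m - j) * alternant m (g(j := F (lam j + m - j - 1))) u = 0"
    if "j \<in> {1..m} - {j\<in>{1..m}. 1 \<le> lam j \<and> is_partition m (lam(j := lam j - 1))}" for j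
  proof -
    from that have j: "j \<in> {1..m}" by simp
    with that lower_fails[OF P j]
    consider "j = m" "lam j = 0" | "j < m" "lam (j+1) = lam j" by auto
    then show ?thesis
    proof cases
      case 1
      then show ?thesis using B0 by simp
    next
      case 2
      then have "alternant m (g(j := F (lam j + m - j - 1))) u = 0"
        using j by (intro alternant_equal_columns[of "j+1" m j]) (auto simp: g_def)
      then show ?thesis by simp
    qed
  qed
  show "B (lam j + m - j) * alternant m (g(j := F (lam j + m - j - 1))) u
      = B (lam j + m - j) * alternant m (\<lambda>i. F ((lam(j := lam j - 1)) i + m - i)) u"
    if "j \<in> {j\<in>{1..m}. 1 \<le> lam j \<and> is_partition m (lam(j := lam j - 1))}" for j
  proof -
    from that have "j \<le> m" "1 \<le> lam j" by simp_all
    then have "g(j := F (lam j + m - j - 1)) = (\<lambda>i. F ((lam(j := lam j - 1)) i + m - i))"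
      unfolding g_def by (auto simp: fun_eq_iff)
    then show ?thesis by simp
  qed
qed auto

theorem alternant_partition_recurrence:
  fixes F :: "nat \<Rightarrow> real \<Rightarrow> real" and A B :: "nat \<Rightarrow> real"
    and m :: nat and lam :: "nat \<Rightarrow> nat" and u :: "nat \<Rightarrow> real"
  assumes rec: "\<And>l z. z * F l z = F (l+1) z + A l * F l z + B l * F (l-1) z"
    and B0: "B 0 = 0" and P: "is_partition m lam"
  defines "J \<equiv> \<lambda>\<mu>. alternant m (\<lambda>i. F (\<mu> i + m - i)) u"
  shows "(\<Sum>i=1..m. u i) * J lam
       = (\<Sum>j\<in>{j\<in>{1..m}. is_partition m (lam(j := lam j + 1))}. J (lam(j := lam j + 1)))
         + (\<Sum>j=1..m. A (lam j + m - j)) * J lam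
         + (\<Sum>j\<in>{j\<in>{1..m}. 1 \<le> lam j \<and> is_partition m (lam(j := lam j - 1))}.
              B (lam j + m - j) * J (lam(j := lam j - 1)))"
  using alternant_three_term[OF rec, where k="\<lambda>i. lam i + m - i" and m=m and u=u]
  unfolding J_def raising_terms[OF P, where F=F] lowering_terms[OF P, where B=B and F=F, OF B0] .

theorem mainTheorem8:
  fixes p q :: real and m :: nat and lam :: "nat \<Rightarrow> nat" and u :: "nat \<Rightarrow> real"
  assumes "m \<ge> 1"
    and generic: "p + 2*q \<notin> \<int>"
    and "is_partition m lam"
    and "inj_on u {1..m}"
  shows "(\<Sum>i=1..m. u i) * Jpol p q m lam u =
           (\<Sum>i\<in>{i\<in>{1..m}. is_partition m (lam(i := lam i + 1))}.
               Jpol p q m (lam(i := lam i + 1)) u)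
         + ((\<Sum>i=1..plen m lam. aJ p q (real (lam i + m - i))) + p
             + p * (p + 2*q + 1) / (2 * real m - 2 * real (plen m lam) - p - 2*q - 1))
           * Jpol p q m lam u
         + (\<Sum>i\<in>{i\<in>{1..m}. lam i \<ge> 1 \<and> is_partition m (lam(i := lam i - 1))}.
               bJ p q (real (lam i + m - i)) * Jpol p q m (lam(i := lam i - 1)) u)"
proof -
  define J where "J \<mu> = alternant m (\<lambda>i. fJ p q (\<mu> i + m - i)) u" for \<mu>
  have Jpol_J: "Jpol p q m \<mu> u = J \<mu> / Delta m u" for \<mu>
    unfolding Jpol_def J_def alternant_def by simp
  have "(\<Sum>j=1..m. aJ p q (real (lam j + m - j)))
      = (\<Sum>i=1..plen m lam. aJ p q (real (lam i + m - i))) + p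
        + p * (p + 2*q + 1) / (2 * real m - 2 * real (plen m lam) - p - 2*q - 1)"
    using diagonal_sum[OF assms(3), of "\<lambda>l. aJ p q (real l)"] aJ_telescope[OF generic, of "m - plen m lam"]
      plen_le[of m lam] by simp
  then have "(\<Sum>i=1..m. u i) * J lam
      = (\<Sum>j\<in>{j\<in>{1..m}. is_partition m (lam(j := lam j + 1))}. J (lam(j := lam j + 1)))
        + ((\<Sum>i=1..plen m lam. aJ p q (real (lam i + m - i))) + p
           + p * (p + 2*q + 1) / (2 * real m - 2 * real (plen m lam) - p - 2*q - 1)) * J lam
        + (\<Sum>j\<in>{j\<in>{1..m}. 1 \<le> lam j \<and> is_partition m (lam(j := lam j - 1))}.
              bJ p q (real (lam j + m - j)) * J (lam(j := lam j - 1)))"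
    using alternant_partition_recurrence[where F="fJ p q" and A="\<lambda>l. aJ p q (real l)"
        and B="\<lambda>l. bJ p q (real l)", OF fJ_three_term[OF generic] _ assms(3)]
    unfolding J_def by (simp add: bJ_zero)
  then show ?thesis
    unfolding Jpol_J by (simp add: sum_divide_distrib add_divide_distrib)
qed

end
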